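(* Fix $m\ge1$, $\omega\in\mathbb Z\setminus\{0\}$, $\kappa=2\pi\omega$, and $$\mu_{m,\omega}:=(2\pi)^{2m+4}\min_{n\in\mathbb Z\setminus\{0,\pm\omega\}}|n|^{2m}(n^2-\omega^2)^2>0.$$ There are constants $C_{m,\omega}$ and $C_{m,r,\omega}$ such that for every smooth closed unit-length immersed planar curve with turning number $\omega$, writing $f=k-\kappa$ (as a function of arclength $s\in\mathbb R/\mathbb Z$), $e=\int_0^1f^2ds$, $D=\partial_s$ and $\mathfrak D_m[f]=\int_0^1\big(D^m(D^2+\kappa^2)f\big)^2ds$, one has $$\mathfrak D_m[f]\ge\mu_{m,\omega}e-C_{m,\omega}e^2,\qquad \|D^rf\|_{L^2}^2\le C_{m,r,\omega}\big(\mathfrak D_m[f]+e^2\big)\quad(0\le r\le m+2).$$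
   Context: $k$ is the signed curvature of the curve, and the turning number is $\frac1{2\pi}\int k\,ds$. *)

theory Defs
  imports "HOL-Analysis.Analysis"
begin

fun vderiv :: "nat \<Rightarrow> (real \<Rightarrow> complex) \<Rightarrow> real \<Rightarrow> complex" where
  "vderiv 0 \<gamma> = \<gamma>"
| "vderiv (Suc n) \<gamma> = (\<lambda>t. vector_derivative (vderiv n \<gamma>) (at t))"

definition smooth_curve :: "(real \<Rightarrow> complex) \<Rightarrow> bool" where
  "smooth_curve \<gamma> \<longleftrightarrow> (\<forall>n t. vderiv n \<gamma> differentiable (at t))"

text \<open>Smooth closed immersed planar curve of length 1, parametrised by arclength
  s on R/Z (i.e. 1-periodic with unit speed).\<close>
definition unit_length_closed_curve :: "(real \<Rightarrow> complex) \<Rightarrow> bool" where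
  "unit_length_closed_curve \<gamma> \<longleftrightarrow>
     smooth_curve \<gamma> \<and> (\<forall>s. \<gamma> (s + 1) = \<gamma> s) \<and> (\<forall>s. norm (vderiv 1 \<gamma> s) = 1)"

text \<open>Signed curvature (general formula; equals Im(conj gamma' * gamma'') at unit speed).\<close>
definition signed_curvature :: "(real \<Rightarrow> complex) \<Rightarrow> real \<Rightarrow> real" where
  "signed_curvature \<gamma> s =
     Im (cnj (vderiv 1 \<gamma> s) * vderiv 2 \<gamma> s) / norm (vderiv 1 \<gamma> s) ^ 3"

definition turning_number :: "(real \<Rightarrow> complex) \<Rightarrow> real" where
  "turning_number \<gamma> = (1 / (2 * pi)) * integral {0..1} (signed_curvature \<gamma>)"

definition mu :: "nat \<Rightarrow> int \<Rightarrow> real" where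
  "mu m \<omega> = (2 * pi) ^ (2 * m + 4) *
     (INF n \<in> {n::int. n \<noteq> 0 \<and> n \<noteq> \<omega> \<and> n \<noteq> - \<omega>}.
        \<bar>real_of_int n\<bar> ^ (2 * m) * ((real_of_int n)\<^sup>2 - (real_of_int \<omega>)\<^sup>2)\<^sup>2)"

definition dissipation :: "nat \<Rightarrow> real \<Rightarrow> (real \<Rightarrow> real) \<Rightarrow> real" where
  "dissipation m \<kappa> f =
     integral {0..1} (\<lambda>s. ((deriv ^^ m) (\<lambda>t. (deriv ^^ 2) f t + \<kappa>\<^sup>2 * f t) s)\<^sup>2)"

end

(*
  Write f = k - 2 pi omega for the curvature deviation and expand it in a Fourier series on R/Z.
  The operator D^m (D^2 + kappa^2) acts on the n-th mode by (2 pi i n)^m (kappa^2 - 4 pi^2 n^2),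
  whose squared modulus vanishes exactly at n = 0, +-omega and is at least mu elsewhere; by
  Parseval the dissipation therefore controls every coefficient of f except these three, and,
  through the gap estimate n^2 <= 2 omega^2 |n^2 - omega^2|, every Sobolev norm of order <= m + 2.
  The turning number kills the mean of f. The closing condition (integral of gamma' = 0) reads
  integral of e^(2 pi i omega s) e^(i phi(s)) = 0, phi the primitive of f; linearising e^(i phi)
  shows that the coefficients at +-omega are O(e), so they only cost O(e^2).
*)

theory Submission
  imports Defs "HOL-Probability.Characteristic_Functions"
begin

section \<open>Smooth real functions\<close>

definition smooth_fun :: "(real \<Rightarrow> real) \<Rightarrow> bool" where
  "smooth_fun h \<longleftrightarrow> (\<forall>n x. (deriv ^^ n) h differentiable (at x))"

lemma funpow_deriv_Suc_inner: "(deriv ^^ Suc n) h = (deriv ^^ n) (deriv h)"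
  by (simp add: funpow_Suc_right del: funpow.simps)

lemma smooth_fun_has_real_derivative:
  "smooth_fun h \<Longrightarrow> ((deriv ^^ n) h has_real_derivative (deriv ^^ Suc n) h x) (at x)"
  unfolding smooth_fun_def by (simp add: DERIV_deriv_iff_real_differentiable)

lemma smooth_fun_deriv: "smooth_fun h \<Longrightarrow> smooth_fun (deriv h)"
  unfolding smooth_fun_def by (metis funpow_deriv_Suc_inner)

lemma smooth_fun_funpow_deriv: "smooth_fun h \<Longrightarrow> smooth_fun ((deriv ^^ k) h)"
  by (induction k) (auto intro: smooth_fun_deriv)

lemma smooth_fun_continuous_on: "smooth_fun h \<Longrightarrow> continuous_on S ((deriv ^^ n) h)"
  unfolding smooth_fun_def
  by (intro continuous_at_imp_continuous_on ballI differentiable_imp_continuous_within) blast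

lemma funpow_deriv_add:
  fixes A B :: "real \<Rightarrow> real"
  assumes "\<And>k x. k < n \<Longrightarrow> (deriv ^^ k) A differentiable (at x)"
      and "\<And>k x. k < n \<Longrightarrow> (deriv ^^ k) B differentiable (at x)"
  shows "(deriv ^^ n) (\<lambda>x. A x + B x) = (\<lambda>x. (deriv ^^ n) A x + (deriv ^^ n) B x)"
  using assms
proof (induction n)
  case (Suc n)
  have "((\<lambda>x. (deriv ^^ n) A x + (deriv ^^ n) B x) has_real_derivative
         (deriv ^^ Suc n) A x + (deriv ^^ Suc n) B x) (at x)" for x
    using Suc.prems by (intro derivative_intros) (auto simp: DERIV_deriv_iff_real_differentiable)
  with Suc show ?case
    by (auto intro!: DERIV_imp_deriv)
qed simp

lemma smooth_fun_const: "smooth_fun (\<lambda>x. c)"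
proof -
  have "(deriv ^^ Suc n) (\<lambda>x. c) = (\<lambda>x. 0)" for n
    by (induction n) (auto simp: funpow_deriv_Suc_inner simp del: funpow.simps)
  then show ?thesis
    unfolding smooth_fun_def by (metis differentiable_const funpow_0 not0_implies_Suc)
qed

lemma smooth_fun_add: "smooth_fun A \<Longrightarrow> smooth_fun B \<Longrightarrow> smooth_fun (\<lambda>x. A x + B x)"
  unfolding smooth_fun_def by (subst funpow_deriv_add) (auto intro: differentiable_add)

lemma smooth_fun_mult:
  assumes "smooth_fun g" "smooth_fun h"
  shows "smooth_fun (\<lambda>x. g x * h x)"
proof -
  have "\<forall>g h. smooth_fun g \<longrightarrow> smooth_fun h \<longrightarrow> (\<forall>x. (deriv ^^ n) (\<lambda>x. g x * h x) differentiable (at x))"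
    for n
  proof (induction n rule: less_induct)
    case (less n)
    show ?case
    proof (intro allI impI)
      fix g h x assume g: "smooth_fun g" and h: "smooth_fun h"
      show "(deriv ^^ n) (\<lambda>x. g x * h x) differentiable (at x)"
      proof (cases n)
        case 0
        then show ?thesis using g h unfolding smooth_fun_def by (metis differentiable_mult funpow_0)
      next
        case (Suc k)
        have g': "smooth_fun (deriv g)" and h': "smooth_fun (deriv h)"
          using g h by (auto intro: smooth_fun_deriv)
        have "deriv (\<lambda>x. g x * h x) = (\<lambda>x. deriv g x * h x + g x * deriv h x)"
          using smooth_fun_has_real_derivative[OF g, of 0] smooth_fun_has_real_derivative[OF h, of 0]
          by (intro ext DERIV_imp_deriv) (auto intro!: derivative_eq_intros)
        then have "(deriv ^^ n) (\<lambda>x. g x * h x)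
            = (\<lambda>x. (deriv ^^ k) (\<lambda>x. deriv g x * h x) x + (deriv ^^ k) (\<lambda>x. g x * deriv h x) x)"
          using less g h g' h' Suc by (simp only: funpow_deriv_Suc_inner) (rule funpow_deriv_add; simp)
        then show ?thesis
          using less g h g' h' Suc by (simp add: differentiable_add)
      qed
    qed
  qed
  then show ?thesis
    using assms unfolding smooth_fun_def by blast
qed

lemma smooth_fun_diff: "smooth_fun A \<Longrightarrow> smooth_fun B \<Longrightarrow> smooth_fun (\<lambda>x. A x - B x)"
  using smooth_fun_add[of A "\<lambda>x. - 1 * B x"] smooth_fun_mult[OF smooth_fun_const, of B "- 1"]
  by simp

lemma smooth_fun_periodic:
  assumes "smooth_fun h" "\<And>s. h (s + 1) = h s"
  shows "(deriv ^^ n) h (s + 1) = (deriv ^^ n) h s"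
proof (induction n arbitrary: s)
  case (Suc n)
  have "((\<lambda>t. (deriv ^^ n) h (t + 1)) has_real_derivative (deriv ^^ Suc n) h (s + 1)) (at s)"
    using smooth_fun_has_real_derivative[OF assms(1), of n "s + 1"] by (simp only: DERIV_shift)
  then have "((deriv ^^ n) h has_real_derivative (deriv ^^ Suc n) h (s + 1)) (at s)"
    using Suc by simp
  then show ?case
    using smooth_fun_has_real_derivative[OF assms(1)] DERIV_unique by blast
qed (use assms in simp)

section \<open>Fourier series on the unit interval\<close>

definition fourier_mode :: "int \<Rightarrow> real \<Rightarrow> complex" where
  "fourier_mode n s = exp (\<i> * of_real (2 * pi * of_int n * s))"

definition fourier_coeff :: "(real \<Rightarrow> real) \<Rightarrow> int \<Rightarrow> complex" where
  "fourier_coeff g n = integral {0..1} (\<lambda>s. of_real (g s) * fourier_mode (- n) s)"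

lemma fourier_mode_has_vector_derivative:
  "(fourier_mode n has_vector_derivative (\<i> * of_real (2 * pi * of_int n)) * fourier_mode n s)
     (at s within S)"
proof -
  have eq: "fourier_mode n = (\<lambda>x. exp (\<i> * of_real (2 * pi * of_int n) * of_real x))"
    by (rule ext) (simp add: fourier_mode_def mult.assoc)
  have "((\<lambda>z. exp (\<i> * of_real (2 * pi * of_int n) * z)) has_field_derivative
         exp (\<i> * of_real (2 * pi * of_int n) * of_real s) * (\<i> * of_real (2 * pi * of_int n)))
         (at (of_real s))"
    by (auto intro!: derivative_eq_intros)
  from has_vector_derivative_real_field[OF this, of S] show ?thesis
    unfolding eq by (simp add: mult.commute)
qed

lemma continuous_on_fourier_mode [continuous_intros]: "continuous_on S (fourier_mode n)"
  unfolding fourier_mode_def by (intro continuous_intros)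

lemma fourier_mode_add: "fourier_mode n s * fourier_mode m s = fourier_mode (n + m) s"
  unfolding fourier_mode_def by (simp add: exp_add[symmetric] algebra_simps)

lemma cnj_fourier_mode: "cnj (fourier_mode n s) = fourier_mode (- n) s"
  unfolding fourier_mode_def by (simp add: exp_cnj)

lemma norm_fourier_mode [simp]: "norm (fourier_mode n s) = 1"
  unfolding fourier_mode_def by simp

lemma fourier_mode_0 [simp]: "fourier_mode 0 s = 1" and fourier_mode_at_0 [simp]: "fourier_mode n 0 = 1"
  unfolding fourier_mode_def by simp_all

lemma fourier_mode_at_1 [simp]: "fourier_mode n 1 = 1"
proof -
  have "fourier_mode n 1 = exp ((2 * of_int n * pi) * \<i>)"
    unfolding fourier_mode_def by (simp add: mult_ac)
  also have "\<dots> = 1" by (rule exp_integer_2pi) simp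
  finally show ?thesis .
qed

lemma has_integral_fourier_mode: "(fourier_mode k has_integral (if k = 0 then 1 else 0)) {0..1}"
proof (cases "k = 0")
  case False
  define c where "c = \<i> * of_real (2 * pi * of_int k)"
  have "c \<noteq> 0" using False by (simp add: c_def)
  then have "((\<lambda>s. fourier_mode k s / c) has_vector_derivative fourier_mode k s) (at s within {0..1})"
    for s
    using has_vector_derivative_divide[OF fourier_mode_has_vector_derivative[of k s "{0..1}"], of c]
    by (simp add: c_def)
  then have "(fourier_mode k has_integral (fourier_mode k 1 / c - fourier_mode k 0 / c)) {0..1}"
    by (intro fundamental_theorem_of_calculus) auto
  with False show ?thesis by simp
next
  case True
  have "fourier_mode 0 = (\<lambda>_. 1)" by (rule ext) simp
  then show ?thesis using True has_integral_const_real[of "1::complex" 0 1] by simp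
qed

lemma integral_continuous_of_real:
  fixes g :: "real \<Rightarrow> real"
  assumes "continuous_on {a..b} g"
  shows "integral {a..b} (\<lambda>s. complex_of_real (g s)) = of_real (integral {a..b} g)"
  using assms by (intro integral_unique has_integral_of_real integrable_integral integrable_continuous_interval)

lemma fourier_coeff_0:
  "continuous_on {0..1} g \<Longrightarrow> fourier_coeff g 0 = of_real (integral {0..1} g)"
  unfolding fourier_coeff_def by (simp add: integral_continuous_of_real)

lemma fourier_coeff_uminus: "fourier_coeff g (- n) = cnj (fourier_coeff g n)"
  unfolding fourier_coeff_def integral_cnj by (simp add: cnj_fourier_mode)

lemma fourier_coeff_add_scaled:
  assumes "continuous_on {0..1} A" "continuous_on {0..1} B"
  shows "fourier_coeff (\<lambda>t. A t + c * B t) n = fourier_coeff A n + of_real c * fourier_coeff B n"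
proof -
  have "fourier_coeff (\<lambda>t. A t + c * B t) n = integral {0..1} (\<lambda>s. of_real (A s) * fourier_mode (- n) s
          + of_real c * (of_real (B s) * fourier_mode (- n) s))"
    unfolding fourier_coeff_def by (simp add: algebra_simps)
  also have "\<dots> = fourier_coeff A n + integral {0..1} (\<lambda>s. of_real c * (of_real (B s) * fourier_mode (- n) s))"
    unfolding fourier_coeff_def
    by (intro integral_add integrable_continuous_interval continuous_intros assms)
  also have "\<dots> = fourier_coeff A n + of_real c * fourier_coeff B n"
    unfolding fourier_coeff_def integral_mult_right ..
  finally show ?thesis .
qed

lemma fourier_coeff_derivative:
  fixes h h' :: "real \<Rightarrow> real"
  assumes ch: "continuous_on {0..1} h"
    and d: "\<And>x. x \<in> {0<..<1} \<Longrightarrow> (h has_real_derivative h' x) (at x)"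
    and h01: "h 0 = h 1"
  shows "fourier_coeff h' n = \<i> * of_real (2 * pi * of_int n) * fourier_coeff h n"
proof -
  define c where "c = \<i> * of_real (2 * pi * of_int (- n))"
  define I where "I = fourier_coeff h n"
  have "((\<lambda>s. of_real (h s) * fourier_mode (- n) s) has_integral I) {0..1}"
    unfolding I_def fourier_coeff_def
    by (intro integrable_integral integrable_continuous_interval continuous_intros ch)
  from has_integral_mult_right[OF this, of c]
  have parts: "((\<lambda>s. of_real (h s) * (c * fourier_mode (- n) s)) has_integral
      (of_real (h 1) * fourier_mode (- n) 1 - of_real (h 0) * fourier_mode (- n) 0 - (- (c * I))))
      {0..1}"
    using h01 by (simp add: mult_ac)
  have "((\<lambda>s. of_real (h' s) * fourier_mode (- n) s) has_integral - (c * I)) {0..1}"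
  proof (rule integration_by_parts_interior[OF bounded_bilinear_mult, of 0 1 "\<lambda>s. of_real (h s)"])
    show "continuous_on {0..1} (\<lambda>s. complex_of_real (h s))"
      by (intro continuous_intros ch)
    show "\<And>x. x \<in> {0<..<1} \<Longrightarrow>
        ((\<lambda>s. complex_of_real (h s)) has_vector_derivative of_real (h' x)) (at x)"
      using d by (simp add: has_vector_derivative_complex_iff)
    show "\<And>x. x \<in> {0<..<1} \<Longrightarrow>
        (fourier_mode (- n) has_vector_derivative c * fourier_mode (- n) x) (at x)"
      unfolding c_def by (rule fourier_mode_has_vector_derivative)
  qed (use parts in \<open>auto intro: continuous_on_fourier_mode\<close>)
  then show ?thesis
    unfolding fourier_coeff_def I_def c_def by (simp add: integral_unique)
qed

lemma fourier_coeff_funpow_deriv: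
  assumes "smooth_fun h" "\<And>s. h (s + 1) = h s"
  shows "fourier_coeff ((deriv ^^ r) h) n = (\<i> * of_real (2 * pi * of_int n)) ^ r * fourier_coeff h n"
proof (induction r)
  case (Suc r)
  have "fourier_coeff ((deriv ^^ Suc r) h) n
      = \<i> * of_real (2 * pi * of_int n) * fourier_coeff ((deriv ^^ r) h) n"
  proof (rule fourier_coeff_derivative)
    show "continuous_on {0..1} ((deriv ^^ r) h)"
      by (rule smooth_fun_continuous_on[OF assms(1)])
    show "\<And>x. ((deriv ^^ r) h has_real_derivative (deriv ^^ Suc r) h x) (at x)"
      by (rule smooth_fun_has_real_derivative[OF assms(1)])
    show "(deriv ^^ r) h 0 = (deriv ^^ r) h 1"
      by (metis add_0 smooth_fun_periodic[OF assms])
  qed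
  with Suc show ?case by (simp only: power_Suc mult.assoc)
qed simp


lemma norm_square_sub_trig_sum:
  "complex_of_real ((cmod (of_real x - (\<Sum>n\<in>S. b n * fourier_mode n s)))\<^sup>2) = of_real (x\<^sup>2)
    - (\<Sum>n\<in>S. cnj (b n) * (of_real x * fourier_mode (- n) s))
    - (\<Sum>n\<in>S. b n * (of_real x * fourier_mode n s))
    + (\<Sum>n\<in>S. \<Sum>m\<in>S. b n * cnj (b m) * fourier_mode (n - m) s)"
proof -
  define P where "P = (\<Sum>n\<in>S. b n * fourier_mode n s)"
  have cnj_P: "cnj P = (\<Sum>m\<in>S. cnj (b m) * fourier_mode (- m) s)"
    unfolding P_def by (simp add: cnj_fourier_mode)
  have modes: "fourier_mode n s * fourier_mode (- m) s = fourier_mode (n - m) s" for n m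
    using fourier_mode_add[of n s "- m"] by simp
  have "complex_of_real ((cmod (of_real x - P))\<^sup>2) = (of_real x - P) * (of_real x - cnj P)"
    using complex_norm_square[of "of_real x - P"] by simp
  also have "\<dots> = of_real x * of_real x - of_real x * cnj P - P * of_real x + P * cnj P"
    by (simp add: algebra_simps)
  also have "of_real x * of_real x = complex_of_real (x\<^sup>2)"
    by (simp add: power2_eq_square)
  also have "of_real x * cnj P = (\<Sum>n\<in>S. cnj (b n) * (of_real x * fourier_mode (- n) s))"
    unfolding cnj_P by (simp add: sum_distrib_left mult_ac)
  also have "P * of_real x = (\<Sum>n\<in>S. b n * (of_real x * fourier_mode n s))"
    unfolding P_def by (simp add: sum_distrib_left sum_distrib_right mult_ac)
  also have "P * cnj P = (\<Sum>n\<in>S. \<Sum>m\<in>S. b n * cnj (b m) * fourier_mode (n - m) s)"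
    unfolding cnj_P unfolding P_def sum_product
    by (intro sum.cong refl) (simp add: modes[symmetric] mult_ac)
  finally show ?thesis
    unfolding P_def .
qed

lemma has_integral_trig_sum_times_cnj:
  assumes "finite S"
  shows "((\<lambda>s. \<Sum>n\<in>S. \<Sum>m\<in>S. b n * cnj (b m) * fourier_mode (n - m) s) has_integral
      (\<Sum>n\<in>S. b n * cnj (b n))) {0..1}"
proof (intro has_integral_sum assms)
  fix n assume "n \<in> S"
  have "((\<lambda>s. \<Sum>m\<in>S. b n * cnj (b m) * fourier_mode (n - m) s) has_integral
      (\<Sum>m\<in>S. b n * cnj (b m) * (if n - m = 0 then 1 else 0))) {0..1}"
    by (intro has_integral_sum assms has_integral_mult_right has_integral_fourier_mode)
  also have "(\<Sum>m\<in>S. b n * cnj (b m) * (if n - m = 0 then 1 else 0))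
      = (\<Sum>m\<in>S. if n = m then b n * cnj (b m) else 0)"
    by (intro sum.cong refl) auto
  also have "\<dots> = b n * cnj (b n)"
    using \<open>n \<in> S\<close> assms by (simp add: sum.delta)
  finally show "((\<lambda>s. \<Sum>m\<in>S. b n * cnj (b m) * fourier_mode (n - m) s) has_integral
      b n * cnj (b n)) {0..1}" .
qed

lemma integral_norm_square_sub_trig_sum:
  fixes g :: "real \<Rightarrow> real" and b :: "int \<Rightarrow> complex"
  assumes cg: "continuous_on {0..1} g" and S: "finite S"
  shows "integral {0..1} (\<lambda>s. (cmod (of_real (g s) - (\<Sum>n\<in>S. b n * fourier_mode n s)))\<^sup>2)
        = integral {0..1} (\<lambda>s. (g s)\<^sup>2) - (\<Sum>n\<in>S. (cmod (fourier_coeff g n))\<^sup>2)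
          + (\<Sum>n\<in>S. (cmod (b n - fourier_coeff g n))\<^sup>2)"
proof -
  define \<gamma> where "\<gamma> = fourier_coeff g"
  define F where "F s = (cmod (of_real (g s) - (\<Sum>n\<in>S. b n * fourier_mode n s)))\<^sup>2" for s
  have coeff: "((\<lambda>s. of_real (g s) * fourier_mode (- n) s) has_integral \<gamma> n) {0..1}" for n
    unfolding \<gamma>_def fourier_coeff_def
    by (intro integrable_integral integrable_continuous_interval continuous_intros cg)
  have coeff_cnj: "((\<lambda>s. of_real (g s) * fourier_mode n s) has_integral cnj (\<gamma> n)) {0..1}" for n
    using has_integral_cnj[THEN iffD2, OF coeff[of n]] by (simp add: o_def cnj_fourier_mode)
  have "((\<lambda>s. complex_of_real ((g s)\<^sup>2)) has_integral of_real (integral {0..1} (\<lambda>s. (g s)\<^sup>2)))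
      {0..1}"
    by (intro has_integral_of_real integrable_integral integrable_continuous_interval
          continuous_intros cg)
  then have "((\<lambda>s. complex_of_real (F s)) has_integral
      of_real (integral {0..1} (\<lambda>s. (g s)\<^sup>2)) - (\<Sum>n\<in>S. cnj (b n) * \<gamma> n)
      - (\<Sum>n\<in>S. b n * cnj (\<gamma> n)) + (\<Sum>n\<in>S. b n * cnj (b n))) {0..1}"
    unfolding F_def norm_square_sub_trig_sum
    by (intro has_integral_add has_integral_diff has_integral_sum S has_integral_mult_right
          coeff coeff_cnj has_integral_trig_sum_times_cnj)
  moreover have "((\<lambda>s. complex_of_real (F s)) has_integral of_real (integral {0..1} F)) {0..1}"
    unfolding F_def
    by (intro has_integral_of_real integrable_integral integrable_continuous_interval
          continuous_intros cg)
  ultimately have "complex_of_real (integral {0..1} F)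
      = of_real (integral {0..1} (\<lambda>s. (g s)\<^sup>2)) - (\<Sum>n\<in>S. cnj (b n) * \<gamma> n)
        - (\<Sum>n\<in>S. b n * cnj (\<gamma> n)) + (\<Sum>n\<in>S. b n * cnj (b n))"
    using has_integral_unique by blast
  also have "\<dots> = complex_of_real (integral {0..1} (\<lambda>s. (g s)\<^sup>2)
      - (\<Sum>n\<in>S. (cmod (\<gamma> n))\<^sup>2) + (\<Sum>n\<in>S. (cmod (b n - \<gamma> n))\<^sup>2))"
  proof -
    have "(b n - \<gamma> n) * cnj (b n - \<gamma> n)
        = b n * cnj (b n) - cnj (b n) * \<gamma> n - b n * cnj (\<gamma> n) + \<gamma> n * cnj (\<gamma> n)" for n
      by (simp add: algebra_simps)
    then have "(\<Sum>n\<in>S. (b n - \<gamma> n) * cnj (b n - \<gamma> n))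
        = (\<Sum>n\<in>S. b n * cnj (b n)) - (\<Sum>n\<in>S. cnj (b n) * \<gamma> n)
          - (\<Sum>n\<in>S. b n * cnj (\<gamma> n)) + (\<Sum>n\<in>S. \<gamma> n * cnj (\<gamma> n))"
      by (simp only: sum.distrib sum_subtractf)
    then show ?thesis
      by (simp only: of_real_add of_real_diff of_real_sum complex_norm_square) simp
  qed
  finally show ?thesis
    unfolding F_def \<gamma>_def of_real_eq_iff .
qed

corollary bessel_inequality:
  assumes "continuous_on {0..1} g" "finite S"
  shows "(\<Sum>n\<in>S. (cmod (fourier_coeff g n))\<^sup>2) \<le> integral {0..1} (\<lambda>s. (g s)\<^sup>2)"
proof -
  have "0 \<le> integral {0..1}
      (\<lambda>s. (cmod (of_real (g s) - (\<Sum>n\<in>S. fourier_coeff g n * fourier_mode n s)))\<^sup>2)"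
    by (intro integral_nonneg integrable_continuous_interval continuous_intros assms) auto
  then show ?thesis
    using integral_norm_square_sub_trig_sum[OF assms, of "fourier_coeff g"] by simp
qed

corollary integral_square_le_trig_approx:
  assumes "continuous_on {0..1} g" "finite S"
    and "\<And>s. s \<in> {0..1} \<Longrightarrow> cmod (of_real (g s) - (\<Sum>n\<in>S. b n * fourier_mode n s)) \<le> d"
  shows "integral {0..1} (\<lambda>s. (g s)\<^sup>2) \<le> (\<Sum>n\<in>S. (cmod (fourier_coeff g n))\<^sup>2) + d\<^sup>2"
proof -
  have "integral {0..1} (\<lambda>s. (cmod (of_real (g s) - (\<Sum>n\<in>S. b n * fourier_mode n s)))\<^sup>2)
      \<le> integral {0..1} (\<lambda>s::real. d\<^sup>2)"
    using assms(3)
    by (intro integral_le integrable_continuous_interval continuous_intros assms(1,2) power_mono)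
       auto
  moreover have "0 \<le> (\<Sum>n\<in>S. (cmod (b n - fourier_coeff g n))\<^sup>2)"
    by (intro sum_nonneg) auto
  ultimately show ?thesis
    using integral_norm_square_sub_trig_sum[OF assms(1,2), of b] by simp
qed

definition trig_poly :: "(real \<Rightarrow> complex) \<Rightarrow> bool" where
  "trig_poly p \<longleftrightarrow> (\<exists>S b. finite S \<and> (\<forall>s. p s = (\<Sum>n\<in>S. b n * fourier_mode n s)))"

lemma trig_poly_scaled_mode: "trig_poly (\<lambda>s. c * fourier_mode k s)"
  unfolding trig_poly_def by (intro exI[of _ "{k}"] exI[of _ "\<lambda>_. c"]) simp

lemma trig_poly_const: "trig_poly (\<lambda>s. c)"
  using trig_poly_scaled_mode[of c 0] by simp

lemma trig_poly_add:
  assumes "trig_poly p" "trig_poly q"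
  shows "trig_poly (\<lambda>s. p s + q s)"
proof -
  obtain S b where S: "finite S" "\<And>s. p s = (\<Sum>n\<in>S. b n * fourier_mode n s)"
    using assms(1) unfolding trig_poly_def by blast
  obtain T c where T: "finite T" "\<And>s. q s = (\<Sum>n\<in>T. c n * fourier_mode n s)"
    using assms(2) unfolding trig_poly_def by blast
  have extend: "(\<Sum>n\<in>S \<union> T. if n \<in> U then a n * fourier_mode n s else 0)
      = (\<Sum>n\<in>U. a n * fourier_mode n s)" if "U \<subseteq> S \<union> T" for U a s
  proof -
    have "(\<Sum>n\<in>S \<union> T. if n \<in> U then a n * fourier_mode n s else 0)
        = (\<Sum>n\<in>(S \<union> T) \<inter> U. a n * fourier_mode n s)"
      using S(1) T(1) by (simp add: sum.inter_restrict)
    also have "(S \<union> T) \<inter> U = U" using that by blast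
    finally show ?thesis .
  qed
  define d where "d n = (if n \<in> S then b n else 0) + (if n \<in> T then c n else 0)" for n
  have "p s + q s = (\<Sum>n\<in>S \<union> T. d n * fourier_mode n s)" for s
  proof -
    have "(\<Sum>n\<in>S \<union> T. d n * fourier_mode n s)
        = (\<Sum>n\<in>S \<union> T. (if n \<in> S then b n * fourier_mode n s else 0)
            + (if n \<in> T then c n * fourier_mode n s else 0))"
      by (intro sum.cong refl) (simp add: d_def distrib_right)
    also have "\<dots> = p s + q s"
      unfolding sum.distrib S(2) T(2) by (simp add: extend)
    finally show ?thesis ..
  qed
  then show ?thesis
    unfolding trig_poly_def using S(1) T(1) by blast
qed

lemma trig_poly_sum:
  "finite I \<Longrightarrow> (\<And>i. i \<in> I \<Longrightarrow> trig_poly (p i)) \<Longrightarrow> trig_poly (\<lambda>s. \<Sum>i\<in>I. p i s)"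
  by (induction I rule: finite_induct) (auto intro: trig_poly_add trig_poly_const)

lemma trig_poly_mult:
  assumes "trig_poly p" "trig_poly q"
  shows "trig_poly (\<lambda>s. p s * q s)"
proof -
  obtain S b where S: "finite S" "\<And>s. p s = (\<Sum>n\<in>S. b n * fourier_mode n s)"
    using assms(1) unfolding trig_poly_def by blast
  obtain T c where T: "finite T" "\<And>s. q s = (\<Sum>n\<in>T. c n * fourier_mode n s)"
    using assms(2) unfolding trig_poly_def by blast
  have "p s * q s = (\<Sum>n\<in>S. \<Sum>m\<in>T. (b n * c m) * fourier_mode (n + m) s)" for s
    unfolding S(2) T(2) sum_product by (simp add: fourier_mode_add[symmetric] mult_ac)
  moreover have "trig_poly (\<lambda>s. \<Sum>n\<in>S. \<Sum>m\<in>T. (b n * c m) * fourier_mode (n + m) s)"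
    using S(1) T(1) by (intro trig_poly_sum trig_poly_scaled_mode)
  ultimately show ?thesis by simp
qed

lemma trig_poly_real_linear_cis:
  assumes "linear f"
  shows "trig_poly (\<lambda>s. complex_of_real (f (cis (2 * pi * s))))"
proof -
  have linear_cis: "f (cis t) = cos t * f 1 + sin t * f \<i>" for t
  proof -
    have "cis t = cos t *\<^sub>R 1 + sin t *\<^sub>R \<i>"
      by (simp add: complex_eq_iff)
    then show ?thesis
      using assms by (simp add: linear_add linear_scale)
  qed
  have cos: "complex_of_real (cos (2 * pi * s)) = (fourier_mode 1 s + fourier_mode (- 1) s) / 2"
    and sin: "complex_of_real (sin (2 * pi * s)) = (fourier_mode 1 s - fourier_mode (- 1) s) / (2 * \<i>)"
    for s
    unfolding fourier_mode_def cos_of_real[symmetric] sin_of_real[symmetric] cos_exp_eq sin_exp_eq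
    by simp_all
  have "complex_of_real (f (cis (2 * pi * s)))
      = of_real (f 1) / 2 * fourier_mode 1 s + of_real (f 1) / 2 * fourier_mode (- 1) s
        + of_real (f \<i>) / (2 * \<i>) * fourier_mode 1 s
        + (- of_real (f \<i>) / (2 * \<i>)) * fourier_mode (- 1) s" for s
    unfolding linear_cis of_real_add of_real_mult cos sin
    by (simp add: add_divide_distrib diff_divide_distrib algebra_simps)
  then show ?thesis
    by (simp only: trig_poly_add trig_poly_scaled_mode)
qed

lemma trig_poly_real_polynomial_cis:
  "real_polynomial_function q \<Longrightarrow> trig_poly (\<lambda>s. complex_of_real (q (cis (2 * pi * s))))"
proof (induction q rule: real_polynomial_function.induct)
  case (linear f)
  then show ?case by (simp add: bounded_linear.linear trig_poly_real_linear_cis)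
next
  case (const c)
  then show ?case by (rule trig_poly_const)
next
  case (add f g)
  then show ?case by (simp only: of_real_add trig_poly_add)
next
  case (mult f g)
  then show ?case by (simp only: of_real_mult trig_poly_mult)
qed

lemma periodic_Arg_cis:
  fixes g :: "real \<Rightarrow> real"
  assumes per: "\<And>x. g (x + 1) = g x" and s: "s \<in> {0..1}"
  shows "g (Arg (cis (2 * pi * s)) / (2 * pi)) = g s"
proof (cases "s \<le> 1 / 2")
  case True
  have "0 \<le> 2 * pi * s"
    using s by simp
  then have lower: "- pi < 2 * pi * s"
    using pi_gt_zero by linarith
  have "pi * (2 * s) \<le> pi * 1"
    using True by (intro mult_left_mono) auto
  then have upper: "2 * pi * s \<le> pi"
    by (simp add: mult_ac)
  have "Arg (cis (2 * pi * s)) = 2 * pi * s"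
    using lower upper by (intro Arg_unique[of 1]) (auto simp: cis_conv_exp)
  then show ?thesis by simp
next
  case False
  have "cis (2 * pi * s - 2 * pi) = cis (2 * pi * s)"
    by (simp add: cis_conv_exp exp_diff algebra_simps)
  moreover have "- pi < 2 * pi * s - 2 * pi" "2 * pi * s - 2 * pi \<le> pi"
    using False s pi_gt_zero by (auto simp: algebra_simps)
  ultimately have "Arg (cis (2 * pi * s)) = 2 * pi * s - 2 * pi"
    by (intro Arg_unique[of 1]) (auto simp: cis_conv_exp)
  then have "Arg (cis (2 * pi * s)) / (2 * pi) = s - 1"
    by (simp add: field_simps)
  then show ?thesis
    using per[of "s - 1"] by simp
qed

lemma continuous_on_periodic_Arg:
  fixes g :: "real \<Rightarrow> real"
  assumes cg: "continuous_on UNIV g" and per: "\<And>x. g (x + 1) = g x"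
  shows "continuous_on (sphere 0 1) (\<lambda>z. g (Arg z / (2 * pi)))"
proof -
  define A where "A = sphere (0::complex) 1 \<inter> {z. Re z \<ge> 0}"
  define B where "B = sphere (0::complex) 1 \<inter> {z. Re z \<le> 0}"
  have "continuous_on A (\<lambda>z. g (Arg z / (2 * pi)))"
    by (intro continuous_on_compose2[OF cg] continuous_intros)
       (auto simp: A_def complex_nonpos_Reals_iff norm_complex_def)
  moreover have "continuous_on B (\<lambda>z. g (Arg z / (2 * pi)))"
  proof -
    have "g (Arg z / (2 * pi)) = g (Arg (- z) / (2 * pi) + 1 / 2)" if "z \<in> B" for z
    proof -
      have "z \<noteq> 0" using that by (auto simp: B_def)
      then show ?thesis
        using Arg_minus[of z] per[of "Arg z / (2 * pi)"] by (auto simp: field_simps)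
    qed
    moreover have "continuous_on B (\<lambda>z. g (Arg (- z) / (2 * pi) + 1 / 2))"
      by (intro continuous_on_compose2[OF cg] continuous_intros)
         (auto simp: B_def complex_nonpos_Reals_iff norm_complex_def)
    ultimately show ?thesis
      using continuous_on_cong by fastforce
  qed
  ultimately have "continuous_on (A \<union> B) (\<lambda>z. g (Arg z / (2 * pi)))"
    by (intro continuous_on_closed_Un)
       (auto simp: A_def B_def intro!: closed_Int closed_halfspace_Re_ge closed_halfspace_Re_le)
  moreover have "A \<union> B = sphere 0 1"
    unfolding A_def B_def by auto
  ultimately show ?thesis by simp
qed

text \<open>A continuous 1-periodic function is a continuous function on the unit circle; on the circle a
  real polynomial in \<open>Re z, Im z\<close> is a trigonometric polynomial, so Stone-Weierstrass applies.\<close>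

lemma periodic_trig_approx:
  fixes g :: "real \<Rightarrow> real"
  assumes cg: "continuous_on UNIV g" and per: "\<And>x. g (x + 1) = g x" and d: "d > 0"
  obtains S b where "finite S"
    "\<And>s. s \<in> {0..1} \<Longrightarrow> cmod (of_real (g s) - (\<Sum>n\<in>S. b n * fourier_mode n s)) \<le> d"
proof -
  obtain q where q: "polynomial_function q"
    "\<And>z. z \<in> sphere 0 1 \<Longrightarrow> \<bar>g (Arg z / (2 * pi)) - q z\<bar> < d"
    using Stone_Weierstrass_polynomial_function[OF compact_sphere continuous_on_periodic_Arg[OF cg per] d]
    by auto
  then have "real_polynomial_function q"
    by (simp add: real_polynomial_function_eq)
  then obtain S b where S: "finite S"
    "\<And>s. complex_of_real (q (cis (2 * pi * s))) = (\<Sum>n\<in>S. b n * fourier_mode n s)"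
    using trig_poly_real_polynomial_cis unfolding trig_poly_def by blast
  have "cmod (of_real (g s) - (\<Sum>n\<in>S. b n * fourier_mode n s)) \<le> d" if "s \<in> {0..1}" for s
    using q(2)[of "cis (2 * pi * s)"] periodic_Arg_cis[of g, OF per that] S(2)[of s, symmetric]
    by (simp flip: of_real_diff)
  with S(1) that show ?thesis by blast
qed

theorem parseval:
  fixes g :: "real \<Rightarrow> real"
  assumes cg: "continuous_on UNIV g" and per: "\<And>s. g (s + 1) = g s"
  shows "((\<lambda>n. (cmod (fourier_coeff g n))\<^sup>2) has_sum integral {0..1} (\<lambda>s. (g s)\<^sup>2)) UNIV"
proof -
  let ?a = "\<lambda>n. (cmod (fourier_coeff g n))\<^sup>2" and ?I = "integral {0..1} (\<lambda>s. (g s)\<^sup>2)"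
  have cg01: "continuous_on {0..1} g"
    using cg by (rule continuous_on_subset) simp
  have bessel: "sum ?a F \<le> ?I" if "finite F" for F
    by (rule bessel_inequality[OF cg01 that])
  then have bdd: "bdd_above (sum ?a ` {F. finite F \<and> F \<subseteq> UNIV})"
    by (intro bdd_aboveI[of _ ?I]) auto
  have "?I \<le> (SUP F\<in>{F. finite F \<and> F \<subseteq> UNIV}. sum ?a F)"
  proof (rule field_le_epsilon)
    fix \<epsilon> :: real assume "0 < \<epsilon>"
    then obtain S b where S: "finite S"
      "\<And>s. s \<in> {0..1} \<Longrightarrow> cmod (of_real (g s) - (\<Sum>n\<in>S. b n * fourier_mode n s)) \<le> sqrt \<epsilon>"
      using periodic_trig_approx[OF cg per, of "sqrt \<epsilon>"] by auto
    have "?I \<le> sum ?a S + (sqrt \<epsilon>)\<^sup>2"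
      by (rule integral_square_le_trig_approx[OF cg01 S])
    also have "sum ?a S \<le> (SUP F\<in>{F. finite F \<and> F \<subseteq> UNIV}. sum ?a F)"
      using S(1) bdd by (intro cSUP_upper) auto
    finally show "?I \<le> (SUP F\<in>{F. finite F \<and> F \<subseteq> UNIV}. sum ?a F) + \<epsilon>"
      using \<open>0 < \<epsilon>\<close> by simp
  qed
  moreover have "(SUP F\<in>{F. finite F \<and> F \<subseteq> UNIV}. sum ?a F) \<le> ?I"
    using bessel by (intro cSUP_least) auto
  moreover have "(?a has_sum (SUP F\<in>{F. finite F \<and> F \<subseteq> UNIV}. sum ?a F)) UNIV"
    using bdd by (intro nonneg_bdd_above_has_sum) (auto simp: conj_commute)
  ultimately show ?thesis
    by (metis order.antisym)
qed

section \<open>The Fourier multiplier of the dissipation\<close>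

definition dissipation_multiplier :: "nat \<Rightarrow> int \<Rightarrow> int \<Rightarrow> real" where
  "dissipation_multiplier m \<omega> n = (2 * pi) ^ (2 * m + 4) *
     (\<bar>real_of_int n\<bar> ^ (2 * m) * ((real_of_int n)\<^sup>2 - (real_of_int \<omega>)\<^sup>2)\<^sup>2)"

lemma dissipation_multiplier_nonneg: "0 \<le> dissipation_multiplier m \<omega> n"
  unfolding dissipation_multiplier_def by simp

lemma cmod_dissipation_symbol:
  fixes n \<omega> :: int
  defines "a \<equiv> \<i> * complex_of_real (2 * pi * of_int n)"
  shows "(cmod (a ^ m * (a\<^sup>2 + of_real ((2 * pi * of_int \<omega>)\<^sup>2)) * z))\<^sup>2
    = dissipation_multiplier m \<omega> n * (cmod z)\<^sup>2"
proof -
  have "a\<^sup>2 + of_real ((2 * pi * of_int \<omega>)\<^sup>2) = of_real ((2 * pi * of_int \<omega>)\<^sup>2 - (2 * pi * of_int n)\<^sup>2)"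
    by (simp add: a_def power_mult_distrib)
  moreover have "cmod a = 2 * pi * \<bar>of_int n\<bar>"
    by (simp add: a_def norm_mult abs_mult)
  ultimately have "cmod (a ^ m * (a\<^sup>2 + of_real ((2 * pi * of_int \<omega>)\<^sup>2)))
      = (2 * pi * \<bar>of_int n\<bar>) ^ m * \<bar>(2 * pi * of_int \<omega>)\<^sup>2 - (2 * pi * of_int n)\<^sup>2\<bar>"
    by (simp only: norm_mult norm_power norm_of_real)
  then have "(cmod (a ^ m * (a\<^sup>2 + of_real ((2 * pi * of_int \<omega>)\<^sup>2))))\<^sup>2
      = ((2 * pi * \<bar>of_int n\<bar>) ^ m)\<^sup>2 * ((2 * pi * of_int \<omega>)\<^sup>2 - (2 * pi * of_int n)\<^sup>2)\<^sup>2"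
    by (simp only: power_mult_distrib power2_abs)
  also have "(2 * pi * of_int \<omega>)\<^sup>2 - (2 * pi * of_int n)\<^sup>2
      = (2 * pi)\<^sup>2 * ((real_of_int \<omega>)\<^sup>2 - (real_of_int n)\<^sup>2)"
    by (simp add: power_mult_distrib right_diff_distrib)
  also have "((2 * pi)\<^sup>2 * ((real_of_int \<omega>)\<^sup>2 - (real_of_int n)\<^sup>2))\<^sup>2
      = (2 * pi) ^ 4 * ((real_of_int n)\<^sup>2 - (real_of_int \<omega>)\<^sup>2)\<^sup>2"
    by (simp only: power_mult_distrib power2_commute[of "(real_of_int \<omega>)\<^sup>2"]
        flip: power_mult) simp
  also have "((2 * pi * \<bar>real_of_int n\<bar>) ^ m)\<^sup>2 = (2 * pi) ^ (2 * m) * \<bar>real_of_int n\<bar> ^ (2 * m)"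
    by (simp add: power_mult_distrib mult.commute[of 2 m] flip: power_mult)
  finally have "(cmod (a ^ m * (a\<^sup>2 + of_real ((2 * pi * of_int \<omega>)\<^sup>2))))\<^sup>2
      = dissipation_multiplier m \<omega> n"
    unfolding dissipation_multiplier_def by (simp add: power_add mult_ac)
  then show ?thesis
    by (simp add: norm_mult power_mult_distrib)
qed

lemma mu_le_dissipation_multiplier:
  assumes "n \<noteq> 0" "n \<noteq> \<omega>" "n \<noteq> - \<omega>"
  shows "mu m \<omega> \<le> dissipation_multiplier m \<omega> n"
  unfolding mu_def dissipation_multiplier_def
  using assms by (intro mult_left_mono cINF_lower bdd_belowI[of _ 0]) auto

lemma mu_pos:
  assumes "\<omega> \<noteq> 0"
  shows "mu m \<omega> > 0"
proof -
  have "1 \<le> \<bar>real_of_int n\<bar> ^ (2 * m) * ((real_of_int n)\<^sup>2 - (real_of_int \<omega>)\<^sup>2)\<^sup>2"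
    if "n \<noteq> 0" "n \<noteq> \<omega>" "n \<noteq> - \<omega>" for n
  proof -
    have "n\<^sup>2 \<noteq> \<omega>\<^sup>2"
      using that power2_eq_iff by blast
    then have "1 \<le> \<bar>real_of_int (n\<^sup>2 - \<omega>\<^sup>2)\<bar>"
      by linarith
    then have "1 \<le> ((real_of_int n)\<^sup>2 - (real_of_int \<omega>)\<^sup>2)\<^sup>2"
      by (simp add: abs_le_square_iff[of 1, simplified])
    moreover have "1 \<le> \<bar>real_of_int n\<bar> ^ (2 * m)"
      using that(1) by (intro one_le_power) linarith
    ultimately show ?thesis
      using mult_mono[of 1 _ 1] by force
  qed
  moreover have "\<bar>\<omega>\<bar> + 1 \<in> {n. n \<noteq> 0 \<and> n \<noteq> \<omega> \<and> n \<noteq> - \<omega>}"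
    by auto
  ultimately have "1 \<le> (INF n \<in> {n::int. n \<noteq> 0 \<and> n \<noteq> \<omega> \<and> n \<noteq> - \<omega>}.
        \<bar>real_of_int n\<bar> ^ (2 * m) * ((real_of_int n)\<^sup>2 - (real_of_int \<omega>)\<^sup>2)\<^sup>2)"
    by (intro cINF_greatest) auto
  then show ?thesis
    unfolding mu_def by (intro mult_pos_pos) auto
qed

lemma square_le_resonance_gap:
  fixes n \<omega> :: int
  assumes "n \<noteq> 0" "n \<noteq> \<omega>" "n \<noteq> - \<omega>" "\<omega> \<noteq> 0"
  shows "n\<^sup>2 \<le> 2 * \<omega>\<^sup>2 * \<bar>n\<^sup>2 - \<omega>\<^sup>2\<bar>"
proof -
  have "n\<^sup>2 \<noteq> \<omega>\<^sup>2"
    using assms power2_eq_iff by blast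
  have "1 \<le> \<omega>\<^sup>2"
    using assms(4) by (simp add: int_one_le_iff_zero_less)
  show ?thesis
  proof (cases "2 * \<omega>\<^sup>2 \<le> n\<^sup>2")
    case True
    then have "n\<^sup>2 \<le> 2 * 1 * (n\<^sup>2 - \<omega>\<^sup>2)"
      by simp
    also have "\<dots> \<le> 2 * \<omega>\<^sup>2 * (n\<^sup>2 - \<omega>\<^sup>2)"
      using \<open>1 \<le> \<omega>\<^sup>2\<close> True by (intro mult_right_mono) auto
    moreover have "0 \<le> n\<^sup>2 - \<omega>\<^sup>2"
      using True \<open>1 \<le> \<omega>\<^sup>2\<close> by linarith
    ultimately show ?thesis
      by simp
  next
    case False
    have "1 \<le> \<bar>n\<^sup>2 - \<omega>\<^sup>2\<bar>"
      using \<open>n\<^sup>2 \<noteq> \<omega>\<^sup>2\<close> by linarith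
    then have "2 * \<omega>\<^sup>2 * 1 \<le> 2 * \<omega>\<^sup>2 * \<bar>n\<^sup>2 - \<omega>\<^sup>2\<bar>"
      by (intro mult_left_mono) auto
    then show ?thesis
      using False by linarith
  qed
qed

lemma frequency_power_le_dissipation_multiplier:
  fixes n \<omega> :: int
  assumes "n \<noteq> 0" "n \<noteq> \<omega>" "n \<noteq> - \<omega>" "\<omega> \<noteq> 0" "r \<le> m + 2"
  shows "(2 * pi * \<bar>real_of_int n\<bar>) ^ (2 * r) \<le> 4 * (real_of_int \<omega>) ^ 4 * dissipation_multiplier m \<omega> n"
proof -
  have "(n\<^sup>2)\<^sup>2 \<le> (2 * \<omega>\<^sup>2 * \<bar>n\<^sup>2 - \<omega>\<^sup>2\<bar>)\<^sup>2"
    using square_le_resonance_gap[OF assms(1-4)] by (intro power_mono) auto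
  then have "real_of_int ((n\<^sup>2)\<^sup>2) \<le> real_of_int ((2 * \<omega>\<^sup>2 * \<bar>n\<^sup>2 - \<omega>\<^sup>2\<bar>)\<^sup>2)"
    by (simp only: of_int_le_iff)
  then have gap: "(real_of_int n) ^ 4 \<le> 4 * (real_of_int \<omega>) ^ 4 * ((real_of_int n)\<^sup>2 - (real_of_int \<omega>)\<^sup>2)\<^sup>2"
    by (simp add: power_mult_distrib power2_abs flip: power_mult)
  have "1 \<le> 2 * pi" "1 \<le> \<bar>real_of_int n\<bar>"
    using pi_gt3 assms(1) by linarith+
  then have "(2 * pi * \<bar>real_of_int n\<bar>) ^ (2 * r) \<le> (2 * pi) ^ (2 * m + 4) * \<bar>real_of_int n\<bar> ^ (2 * m + 4)"
    unfolding power_mult_distrib using assms(5) pi_gt3 by (intro mult_mono power_increasing) auto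
  also have "\<dots> = (2 * pi) ^ (2 * m + 4) * (\<bar>real_of_int n\<bar> ^ (2 * m) * (real_of_int n) ^ 4)"
    by (simp add: power_add power_even_abs_numeral)
  also have "\<dots> \<le> (2 * pi) ^ (2 * m + 4) * (\<bar>real_of_int n\<bar> ^ (2 * m) *
        (4 * (real_of_int \<omega>) ^ 4 * ((real_of_int n)\<^sup>2 - (real_of_int \<omega>)\<^sup>2)\<^sup>2))"
    using gap by (intro mult_left_mono) auto
  also have "\<dots> = 4 * (real_of_int \<omega>) ^ 4 * dissipation_multiplier m \<omega> n"
    unfolding dissipation_multiplier_def by (simp add: mult_ac)
  finally show ?thesis .
qed

section \<open>Spectral estimates for smooth periodic functions\<close>

lemma dissipation_nonneg: "0 \<le> dissipation m \<kappa> f"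
  unfolding dissipation_def
  by (cases "(\<lambda>s. ((deriv ^^ m) (\<lambda>t. (deriv ^^ 2) f t + \<kappa>\<^sup>2 * f t) s)\<^sup>2) integrable_on {0..1}")
     (auto intro: integral_nonneg simp: not_integrable_integral)

lemma smooth_periodic_deriv2_add_scaled:
  assumes "smooth_fun f" "\<And>s. f (s + 1) = f s"
  shows "smooth_fun (\<lambda>t. (deriv ^^ 2) f t + c * f t)"
    and "(deriv ^^ 2) f (s + 1) + c * f (s + 1) = (deriv ^^ 2) f s + c * f s"
  using assms smooth_fun_periodic[OF assms, of 2]
  by (auto intro!: smooth_fun_add smooth_fun_mult smooth_fun_const smooth_fun_funpow_deriv)

lemma fourier_coeff_dissipation_operator:
  fixes n :: int
  assumes "smooth_fun f" "\<And>s. f (s + 1) = f s"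
  defines "a \<equiv> \<i> * complex_of_real (2 * pi * of_int n)"
  shows "fourier_coeff ((deriv ^^ m) (\<lambda>t. (deriv ^^ 2) f t + \<kappa>\<^sup>2 * f t)) n
       = a ^ m * (a\<^sup>2 + of_real (\<kappa>\<^sup>2)) * fourier_coeff f n"
proof -
  define h where "h t = (deriv ^^ 2) f t + \<kappa>\<^sup>2 * f t" for t
  have "smooth_fun h" "\<And>s. h (s + 1) = h s"
    unfolding h_def using smooth_periodic_deriv2_add_scaled[OF assms(1,2)] by blast+
  then have "fourier_coeff ((deriv ^^ m) h) n = a ^ m * fourier_coeff h n"
    unfolding a_def by (rule fourier_coeff_funpow_deriv)
  also have "fourier_coeff h n = fourier_coeff ((deriv ^^ 2) f) n + of_real (\<kappa>\<^sup>2) * fourier_coeff f n"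
    unfolding h_def using smooth_fun_continuous_on[OF assms(1), of _ 0]
    by (intro fourier_coeff_add_scaled smooth_fun_continuous_on assms(1)) simp
  also have "fourier_coeff ((deriv ^^ 2) f) n = a\<^sup>2 * fourier_coeff f n"
    unfolding a_def by (rule fourier_coeff_funpow_deriv[OF assms(1,2)])
  finally show ?thesis
    unfolding h_def by (simp add: algebra_simps)
qed

lemma has_sum_funpow_deriv_square:
  assumes "smooth_fun f" "\<And>s. f (s + 1) = f s"
  shows "((\<lambda>n. (2 * pi * \<bar>real_of_int n\<bar>) ^ (2 * r) * (cmod (fourier_coeff f n))\<^sup>2) has_sum
      integral {0..1} (\<lambda>s. ((deriv ^^ r) f s)\<^sup>2)) UNIV"
proof -
  have "(cmod (fourier_coeff ((deriv ^^ r) f) n))\<^sup>2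
      = (2 * pi * \<bar>real_of_int n\<bar>) ^ (2 * r) * (cmod (fourier_coeff f n))\<^sup>2" for n
    by (simp add: fourier_coeff_funpow_deriv[OF assms] norm_mult norm_power abs_mult
        power_mult_distrib mult.commute[of 2 r] flip: power_mult)
  moreover have "((\<lambda>n. (cmod (fourier_coeff ((deriv ^^ r) f) n))\<^sup>2) has_sum
      integral {0..1} (\<lambda>s. ((deriv ^^ r) f s)\<^sup>2)) UNIV"
    by (intro parseval smooth_fun_continuous_on smooth_fun_periodic assms)
  ultimately show ?thesis by simp
qed

lemma has_sum_dissipation:
  assumes "smooth_fun f" "\<And>s. f (s + 1) = f s"
  shows "((\<lambda>n. dissipation_multiplier m \<omega> n * (cmod (fourier_coeff f n))\<^sup>2) has_sum
      dissipation m (2 * pi * of_int \<omega>) f) UNIV"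
proof -
  define h where "h t = (deriv ^^ 2) f t + (2 * pi * of_int \<omega>)\<^sup>2 * f t" for t
  have h: "smooth_fun h" "\<And>s. h (s + 1) = h s"
    unfolding h_def using smooth_periodic_deriv2_add_scaled[OF assms(1,2)] by blast+
  have "(cmod (fourier_coeff ((deriv ^^ m) h) n))\<^sup>2
      = dissipation_multiplier m \<omega> n * (cmod (fourier_coeff f n))\<^sup>2" for n
    unfolding h_def fourier_coeff_dissipation_operator[OF assms] by (rule cmod_dissipation_symbol)
  moreover have "((\<lambda>n. (cmod (fourier_coeff ((deriv ^^ m) h) n))\<^sup>2) has_sum
      integral {0..1} (\<lambda>s. ((deriv ^^ m) h s)\<^sup>2)) UNIV"
    using h by (intro parseval smooth_fun_continuous_on smooth_fun_periodic)
  ultimately show ?thesis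
    unfolding dissipation_def h_def by simp
qed

lemma has_sum_le_off_finite:
  fixes a b :: "'a \<Rightarrow> real"
  assumes "(a has_sum A) UNIV" "(b has_sum B) UNIV" "finite K"
    and "\<And>n. n \<notin> K \<Longrightarrow> a n \<le> b n" "\<And>n. n \<in> K \<Longrightarrow> 0 \<le> b n"
  shows "A - sum a K \<le> B"
proof (rule has_sum_mono_neutral)
  show "(a has_sum (A - sum a K)) (UNIV - K)"
    using assms(1,3) by (intro has_sum_Diff) auto
qed (use assms in auto)

text \<open>The multiplier vanishes exactly at the frequencies \<open>0, \<plusminus>\<omega>\<close>, so the coefficients there
  have to be controlled separately (by \<open>B\<close>).\<close>

lemma dissipation_lower_bound:
  assumes f: "smooth_fun f" "\<And>s. f (s + 1) = f s" and \<omega>: "\<omega> \<noteq> 0"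
    and "fourier_coeff f 0 = 0" "(cmod (fourier_coeff f \<omega>))\<^sup>2 \<le> B" "(cmod (fourier_coeff f (- \<omega>)))\<^sup>2 \<le> B"
  shows "mu m \<omega> * (integral {0..1} (\<lambda>s. (f s)\<^sup>2) - 2 * B) \<le> dissipation m (2 * pi * of_int \<omega>) f"
proof -
  let ?a = "\<lambda>n. (cmod (fourier_coeff f n))\<^sup>2" and ?K = "{0, \<omega>, - \<omega>}"
  have "((\<lambda>n. mu m \<omega> * ?a n) has_sum mu m \<omega> * integral {0..1} (\<lambda>s. (f s)\<^sup>2)) UNIV"
    using has_sum_funpow_deriv_square[OF f, of 0] by (intro has_sum_cmult_right) simp
  then have "mu m \<omega> * integral {0..1} (\<lambda>s. (f s)\<^sup>2) - (\<Sum>n\<in>?K. mu m \<omega> * ?a n)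
      \<le> dissipation m (2 * pi * of_int \<omega>) f"
    by (rule has_sum_le_off_finite[OF _ has_sum_dissipation[OF f]])
       (auto intro: mult_right_mono mu_le_dissipation_multiplier mult_nonneg_nonneg
          dissipation_multiplier_nonneg)
  moreover have "(\<Sum>n\<in>?K. mu m \<omega> * ?a n) = mu m \<omega> * (?a \<omega> + ?a (- \<omega>))"
    using assms(4) \<omega> by (simp add: ring_distribs)
  moreover have "mu m \<omega> * (?a \<omega> + ?a (- \<omega>)) \<le> mu m \<omega> * (2 * B)"
    using assms(5,6) mu_pos[OF \<omega>, of m] by (intro mult_left_mono) auto
  ultimately show ?thesis
    unfolding right_diff_distrib by linarith
qed

lemma funpow_deriv_square_bound:
  assumes f: "smooth_fun f" "\<And>s. f (s + 1) = f s" and \<omega>: "\<omega> \<noteq> 0" and r: "r \<le> m + 2"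
    and "fourier_coeff f 0 = 0" "(cmod (fourier_coeff f \<omega>))\<^sup>2 \<le> B" "(cmod (fourier_coeff f (- \<omega>)))\<^sup>2 \<le> B"
  shows "integral {0..1} (\<lambda>s. ((deriv ^^ r) f s)\<^sup>2)
    \<le> 4 * (of_int \<omega>) ^ 4 * dissipation m (2 * pi * of_int \<omega>) f + 2 * (2 * pi * of_int \<omega>) ^ (2 * r) * B"
proof -
  let ?b = "\<lambda>n. (2 * pi * \<bar>real_of_int n\<bar>) ^ (2 * r) * (cmod (fourier_coeff f n))\<^sup>2"
  let ?K = "{0, \<omega>, - \<omega>}"
  have "((\<lambda>n. 4 * (of_int \<omega>) ^ 4 * (dissipation_multiplier m \<omega> n * (cmod (fourier_coeff f n))\<^sup>2))
      has_sum 4 * (of_int \<omega>) ^ 4 * dissipation m (2 * pi * of_int \<omega>) f) UNIV"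
    by (intro has_sum_cmult_right has_sum_dissipation f)
  with has_sum_funpow_deriv_square[OF f, of r]
  have "integral {0..1} (\<lambda>s. ((deriv ^^ r) f s)\<^sup>2) - sum ?b ?K
      \<le> 4 * (of_int \<omega>) ^ 4 * dissipation m (2 * pi * of_int \<omega>) f"
  proof (rule has_sum_le_off_finite)
    show "?b n \<le> 4 * (of_int \<omega>) ^ 4 * (dissipation_multiplier m \<omega> n * (cmod (fourier_coeff f n))\<^sup>2)"
      if "n \<notin> ?K" for n
      using frequency_power_le_dissipation_multiplier[of n \<omega> r m] that \<omega> r
      by (simp add: mult.assoc[symmetric] mult_right_mono)
  qed (auto intro!: mult_nonneg_nonneg dissipation_multiplier_nonneg)
  moreover have "sum ?b ?K \<le> 2 * (2 * pi * of_int \<omega>) ^ (2 * r) * B"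
  proof -
    define c where "c = (2 * pi * real_of_int \<omega>) ^ (2 * r)"
    have "(2 * pi * \<bar>real_of_int \<omega>\<bar>) ^ (2 * r) = c"
      using power_even_abs[of "2 * r" "2 * pi * real_of_int \<omega>"] by (simp add: abs_mult c_def)
    then have "sum ?b ?K = c * (cmod (fourier_coeff f \<omega>))\<^sup>2 + c * (cmod (fourier_coeff f (- \<omega>)))\<^sup>2"
      using assms(5) \<omega> by simp
    also have "\<dots> \<le> c * B + c * B"
      using assms(6,7) by (intro add_mono mult_left_mono) (auto simp: c_def power_mult)
    finally show ?thesis
      by (simp add: c_def algebra_simps)
  qed
  ultimately show ?thesis
    by linarith
qed

section \<open>Resonant coefficients\<close>

lemma norm_exp_i_sub_linear_le: "cmod (exp (\<i> * of_real x) - 1 - \<i> * of_real x) \<le> x\<^sup>2 / 2"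
  using iexp_approx1[of x 1] by (simp add: power2_abs diff_diff_eq power2_eq_square)

lemma square_integral_abs_le:
  fixes f :: "real \<Rightarrow> real"
  assumes f: "continuous_on {0..1} f"
  shows "(integral {0..1} (\<lambda>s. \<bar>f s\<bar>))\<^sup>2 \<le> integral {0..1} (\<lambda>s. (f s)\<^sup>2)"
proof -
  define A where "A = integral {0..1} (\<lambda>s. \<bar>f s\<bar>)"
  have i1: "(\<lambda>s. (f s)\<^sup>2) integrable_on {0..1}" and i2: "(\<lambda>s. 2 * A * \<bar>f s\<bar>) integrable_on {0..1}"
    and i3: "(\<lambda>s::real. A\<^sup>2) integrable_on {0..1}"
    by (intro integrable_continuous_interval continuous_intros f)+
  have "0 \<le> integral {0..1} (\<lambda>s. (\<bar>f s\<bar> - A)\<^sup>2)"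
    by (intro integral_nonneg integrable_continuous_interval continuous_intros f) auto
  also have "\<dots> = integral {0..1} (\<lambda>s. (f s)\<^sup>2 - 2 * A * \<bar>f s\<bar> + A\<^sup>2)"
    by (intro integral_cong) (simp add: power2_diff power2_abs)
  also have "\<dots> = integral {0..1} (\<lambda>s. (f s)\<^sup>2) - integral {0..1} (\<lambda>s. 2 * A * \<bar>f s\<bar>)
      + integral {0..1} (\<lambda>s::real. A\<^sup>2)"
    using i1 i2 i3 by (simp only: integral_add integral_diff integrable_diff)
  also have "integral {0..1} (\<lambda>s. 2 * A * \<bar>f s\<bar>) = 2 * A * A"
    unfolding A_def by simp
  finally show ?thesis
    unfolding A_def[symmetric] by (simp add: power2_eq_square)
qed

lemma integral_square_primitive_le:
  fixes f :: "real \<Rightarrow> real"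
  assumes f: "continuous_on {0..1} f"
  shows "integral {0..1} (\<lambda>u. (integral {0..u} f)\<^sup>2) \<le> integral {0..1} (\<lambda>s. (f s)\<^sup>2)"
proof -
  define A where "A = integral {0..1} (\<lambda>s. \<bar>f s\<bar>)"
  have bound: "(integral {0..u} f)\<^sup>2 \<le> A\<^sup>2" if u: "u \<in> {0..1}" for u
  proof -
    have fu: "continuous_on {0..u} f"
      using u by (intro continuous_on_subset[OF f]) auto
    have fu_abs: "continuous_on {0..u} (\<lambda>s. \<bar>f s\<bar>)"
      using fu by (intro continuous_intros)
    have "\<bar>integral {0..u} f\<bar> \<le> integral {0..u} (\<lambda>s. \<bar>f s\<bar>)"
      using integral_norm_bound_integral[OF integrable_continuous_interval[OF fu]
          integrable_continuous_interval[OF fu_abs]] by simp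
    also have "\<dots> \<le> A"
      unfolding A_def using u
      by (intro integral_subset_le integrable_continuous_interval continuous_intros f fu) auto
    finally have "\<bar>integral {0..u} f\<bar>\<^sup>2 \<le> A\<^sup>2"
      by (rule power_mono) simp
    then show ?thesis
      by simp
  qed
  have "integral {0..1} (\<lambda>u. (integral {0..u} f)\<^sup>2) \<le> integral {0..1} (\<lambda>u::real. A\<^sup>2)"
  proof (rule integral_le)
    show "(\<lambda>u. (integral {0..u} f)\<^sup>2) integrable_on {0..1}"
      using indefinite_integral_continuous_1[OF integrable_continuous_interval[OF f]]
      by (intro integrable_continuous_interval continuous_intros)
  qed (use bound in auto)
  also have "\<dots> = A\<^sup>2" by simp
  also have "\<dots> \<le> integral {0..1} (\<lambda>s. (f s)\<^sup>2)"
    unfolding A_def by (rule square_integral_abs_le[OF f])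
  finally show ?thesis .
qed

lemma fourier_coeff_primitive:
  fixes f :: "real \<Rightarrow> real"
  assumes f: "continuous_on {0..1} f" and mean: "integral {0..1} f = 0"
  shows "fourier_coeff f n = \<i> * of_real (2 * pi * of_int n) * fourier_coeff (\<lambda>u. integral {0..u} f) n"
proof (rule fourier_coeff_derivative)
  show "continuous_on {0..1} (\<lambda>u. integral {0..u} f)"
    by (rule indefinite_integral_continuous_1[OF integrable_continuous_interval[OF f]])
  show "((\<lambda>u. integral {0..u} f) has_real_derivative f x) (at x)" if "x \<in> {0<..<1}" for x
  proof -
    have "((\<lambda>u. integral {0..u} f) has_real_derivative f x) (at x within {0<..<1})"
      unfolding has_real_derivative_iff_has_vector_derivative using that
      by (intro has_vector_derivative_within_subset[OF integral_has_vector_derivative[OF f]]) auto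
    moreover have "at x within {0<..<1} = at x"
      using that by (intro at_within_open) auto
    ultimately show ?thesis
      by simp
  qed
qed (use mean in simp)

text \<open>Linearising \<open>exp (\<i> \<phi>) = 1 + \<i> \<phi> + O(\<phi>\<^sup>2)\<close> in the hypothesis shows that the
  \<open>\<omega>\<close>-th mode of \<open>\<phi>\<close> is quadratically small.\<close>

lemma cmod_integral_mode_le_of_closing:
  fixes \<phi> :: "real \<Rightarrow> real"
  assumes \<phi>: "continuous_on {0..1} \<phi>" and "\<omega> \<noteq> 0"
    and closing: "integral {0..1} (\<lambda>s. fourier_mode \<omega> s * exp (\<i> * of_real (\<phi> s))) = 0"
  shows "cmod (integral {0..1} (\<lambda>s. of_real (\<phi> s) * fourier_mode \<omega> s))
    \<le> integral {0..1} (\<lambda>s. (\<phi> s)\<^sup>2) / 2"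
proof -
  define R where "R s = exp (\<i> * of_real (\<phi> s)) - 1 - \<i> * of_real (\<phi> s)" for s
  define J where "J = integral {0..1} (\<lambda>s. of_real (\<phi> s) * fourier_mode \<omega> s)"
  have cR: "continuous_on {0..1} (\<lambda>s. fourier_mode \<omega> s * R s)"
    unfolding R_def by (intro continuous_intros \<phi>)
  have "0 = integral {0..1} (\<lambda>s. fourier_mode \<omega> s + (\<i> * (of_real (\<phi> s) * fourier_mode \<omega> s)
      + fourier_mode \<omega> s * R s))"
    unfolding closing[symmetric] R_def by (intro integral_cong) (simp add: algebra_simps)
  also have "\<dots> = integral {0..1} (fourier_mode \<omega>) + (\<i> * J + integral {0..1} (\<lambda>s. fourier_mode \<omega> s * R s))"
  proof -
    have "fourier_mode \<omega> integrable_on {0..1}"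
      and "(\<lambda>s. \<i> * (of_real (\<phi> s) * fourier_mode \<omega> s)) integrable_on {0..1}"
      and "(\<lambda>s. fourier_mode \<omega> s * R s) integrable_on {0..1}"
      by (intro integrable_continuous_interval continuous_intros cR \<phi>)+
    then show ?thesis
      unfolding J_def by (simp add: integral_add integrable_add)
  qed
  also have "integral {0..1} (fourier_mode \<omega>) = 0"
    using has_integral_fourier_mode[of \<omega>] \<open>\<omega> \<noteq> 0\<close> by (simp add: integral_unique)
  finally have "cmod J = cmod (integral {0..1} (\<lambda>s. fourier_mode \<omega> s * R s))"
    by (metis add_0 add_eq_0_iff mult_1 norm_ii norm_minus_cancel norm_mult)
  also have "\<dots> \<le> integral {0..1} (\<lambda>s. (\<phi> s)\<^sup>2 / 2)"
  proof (rule integral_norm_bound_integral)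
    show "(\<lambda>s. fourier_mode \<omega> s * R s) integrable_on {0..1}"
      by (rule integrable_continuous_interval[OF cR])
    show "(\<lambda>s. (\<phi> s)\<^sup>2 / 2) integrable_on {0..1}"
      by (intro integrable_continuous_interval continuous_intros \<phi>) simp
    show "norm (fourier_mode \<omega> s * R s) \<le> (\<phi> s)\<^sup>2 / 2" for s
      unfolding R_def norm_mult norm_fourier_mode using norm_exp_i_sub_linear_le by simp
  qed
  finally show ?thesis
    unfolding J_def by simp
qed

lemma resonant_fourier_coeff_bound:
  fixes f :: "real \<Rightarrow> real"
  assumes f: "continuous_on {0..1} f" and mean: "integral {0..1} f = 0" and "\<omega> \<noteq> 0"
    and closing: "integral {0..1} (\<lambda>s. fourier_mode \<omega> s * exp (\<i> * of_real (integral {0..s} f))) = 0"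
  shows "(cmod (fourier_coeff f (- \<omega>)))\<^sup>2 \<le> (2 * pi * of_int \<omega>)\<^sup>2 * (integral {0..1} (\<lambda>s. (f s)\<^sup>2))\<^sup>2 / 4"
    and "(cmod (fourier_coeff f \<omega>))\<^sup>2 \<le> (2 * pi * of_int \<omega>)\<^sup>2 * (integral {0..1} (\<lambda>s. (f s)\<^sup>2))\<^sup>2 / 4"
proof -
  define \<phi> where "\<phi> u = integral {0..u} f" for u
  have \<phi>: "continuous_on {0..1} \<phi>"
    unfolding \<phi>_def by (rule indefinite_integral_continuous_1[OF integrable_continuous_interval[OF f]])
  have "cmod (fourier_coeff f (- \<omega>))
      = \<bar>2 * pi * of_int \<omega>\<bar> * cmod (integral {0..1} (\<lambda>s. of_real (\<phi> s) * fourier_mode \<omega> s))"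
    unfolding fourier_coeff_primitive[OF f mean] \<phi>_def[symmetric]
    by (simp add: fourier_coeff_def norm_mult abs_mult)
  also have "\<dots> \<le> \<bar>2 * pi * of_int \<omega>\<bar> * (integral {0..1} (\<lambda>s. (f s)\<^sup>2) / 2)"
  proof -
    have "cmod (integral {0..1} (\<lambda>s. of_real (\<phi> s) * fourier_mode \<omega> s))
        \<le> integral {0..1} (\<lambda>s. (\<phi> s)\<^sup>2) / 2"
      by (rule cmod_integral_mode_le_of_closing[OF \<phi> \<open>\<omega> \<noteq> 0\<close> closing[folded \<phi>_def]])
    also have "\<dots> \<le> integral {0..1} (\<lambda>s. (f s)\<^sup>2) / 2"
      using integral_square_primitive_le[OF f] unfolding \<phi>_def by simp
    finally show ?thesis
      by (intro mult_left_mono) auto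
  qed
  finally have "(cmod (fourier_coeff f (- \<omega>)))\<^sup>2
      \<le> (\<bar>2 * pi * of_int \<omega>\<bar> * (integral {0..1} (\<lambda>s. (f s)\<^sup>2) / 2))\<^sup>2"
    by (intro power_mono) auto
  then show "(cmod (fourier_coeff f (- \<omega>)))\<^sup>2 \<le> (2 * pi * of_int \<omega>)\<^sup>2 * (integral {0..1} (\<lambda>s. (f s)\<^sup>2))\<^sup>2 / 4"
    by (simp add: power_mult_distrib power_divide)
  then show "(cmod (fourier_coeff f \<omega>))\<^sup>2 \<le> (2 * pi * of_int \<omega>)\<^sup>2 * (integral {0..1} (\<lambda>s. (f s)\<^sup>2))\<^sup>2 / 4"
    using fourier_coeff_uminus[of f "- \<omega>"] by simp
qed

section \<open>Closed unit-speed curves\<close>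

lemma smooth_curve_has_vector_derivative:
  "smooth_curve \<gamma> \<Longrightarrow> (vderiv n \<gamma> has_vector_derivative vderiv (Suc n) \<gamma> t) (at t)"
  unfolding smooth_curve_def by (simp add: vector_derivative_works)

lemma smooth_curve_funpow_deriv_Re_Im:
  assumes "smooth_curve \<gamma>"
  shows "(deriv ^^ k) (\<lambda>t. Re (vderiv n \<gamma> t)) = (\<lambda>t. Re (vderiv (n + k) \<gamma> t)) \<and>
         (deriv ^^ k) (\<lambda>t. Im (vderiv n \<gamma> t)) = (\<lambda>t. Im (vderiv (n + k) \<gamma> t))"
proof (induction k)
  case (Suc k)
  have "deriv (\<lambda>t. Re (vderiv (n + k) \<gamma> t)) = (\<lambda>t. Re (vderiv (n + Suc k) \<gamma> t))"
    "deriv (\<lambda>t. Im (vderiv (n + k) \<gamma> t)) = (\<lambda>t. Im (vderiv (n + Suc k) \<gamma> t))"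
    using smooth_curve_has_vector_derivative[OF assms, of "n + k"]
    by (auto intro!: DERIV_imp_deriv has_field_derivative_Re has_field_derivative_Im)
  with Suc show ?case by simp
qed simp

lemma smooth_fun_Re_Im_vderiv:
  assumes "smooth_curve \<gamma>"
  shows "smooth_fun (\<lambda>t. Re (vderiv n \<gamma> t))" "smooth_fun (\<lambda>t. Im (vderiv n \<gamma> t))"
proof -
  have "(deriv ^^ k) (\<lambda>t. Re (vderiv n \<gamma> t)) differentiable (at x) \<and>
        (deriv ^^ k) (\<lambda>t. Im (vderiv n \<gamma> t)) differentiable (at x)" for k x
    using smooth_curve_funpow_deriv_Re_Im[OF assms, of k n]
      has_field_derivative_Re[OF smooth_curve_has_vector_derivative[OF assms, of "n + k" x]]
      has_field_derivative_Im[OF smooth_curve_has_vector_derivative[OF assms, of "n + k" x]]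
    by (auto simp: real_differentiable_def)
  then show "smooth_fun (\<lambda>t. Re (vderiv n \<gamma> t))" "smooth_fun (\<lambda>t. Im (vderiv n \<gamma> t))"
    unfolding smooth_fun_def by auto
qed

lemma vderiv_periodic:
  assumes sm: "smooth_curve \<gamma>" and per: "\<And>s. \<gamma> (s + 1) = \<gamma> s"
  shows "vderiv n \<gamma> (s + 1) = vderiv n \<gamma> s"
proof (induction n arbitrary: s)
  case (Suc n)
  have "((\<lambda>t. vderiv n \<gamma> (t + 1)) has_vector_derivative vderiv (Suc n) \<gamma> (s + 1)) (at s)"
    using smooth_curve_has_vector_derivative[OF sm, of n "s + 1"]
    unfolding has_vector_derivative_complex_iff by (simp add: DERIV_shift)
  then have "(vderiv n \<gamma> has_vector_derivative vderiv (Suc n) \<gamma> (s + 1)) (at s)"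
    using Suc by simp
  then show ?case
    using smooth_curve_has_vector_derivative[OF sm] vector_derivative_unique_at by blast
qed (use per in simp)

lemma signed_curvature_unit_speed:
  "norm (vderiv 1 \<gamma> s) = 1 \<Longrightarrow> signed_curvature \<gamma> s =
     Re (vderiv 1 \<gamma> s) * Im (vderiv 2 \<gamma> s) - Im (vderiv 1 \<gamma> s) * Re (vderiv 2 \<gamma> s)"
  unfolding signed_curvature_def by simp

lemma
  assumes "unit_length_closed_curve \<gamma>"
  shows smooth_fun_signed_curvature: "smooth_fun (signed_curvature \<gamma>)"
    and signed_curvature_periodic: "signed_curvature \<gamma> (s + 1) = signed_curvature \<gamma> s"
proof -
  have sm: "smooth_curve \<gamma>" and per: "\<And>s. \<gamma> (s + 1) = \<gamma> s"
    and curv: "signed_curvature \<gamma> = (\<lambda>s. Re (vderiv 1 \<gamma> s) * Im (vderiv 2 \<gamma> s)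
                 - Im (vderiv 1 \<gamma> s) * Re (vderiv 2 \<gamma> s))"
    using assms signed_curvature_unit_speed unfolding unit_length_closed_curve_def by auto
  show "smooth_fun (signed_curvature \<gamma>)"
    unfolding curv by (intro smooth_fun_diff smooth_fun_mult smooth_fun_Re_Im_vderiv sm)
  show "signed_curvature \<gamma> (s + 1) = signed_curvature \<gamma> s"
    unfolding curv by (simp only: vderiv_periodic[OF sm per])
qed

text \<open>Frenet equation: differentiating \<open>\<bar>\<gamma>'\<bar>\<^sup>2 = 1\<close> shows that \<open>\<gamma>''\<close> is orthogonal to \<open>\<gamma>'\<close>.\<close>

lemma unit_speed_frenet:
  assumes sm: "smooth_curve \<gamma>" and unit: "\<And>s. norm (vderiv 1 \<gamma> s) = 1"
  shows "vderiv 2 \<gamma> s = \<i> * of_real (signed_curvature \<gamma> s) * vderiv 1 \<gamma> s"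
proof -
  define T where "T = vderiv 1 \<gamma>"
  have T': "(T has_vector_derivative vderiv 2 \<gamma> t) (at t)" for t
    using smooth_curve_has_vector_derivative[OF sm, of 1] by (simp add: T_def numeral_2_eq_2)
  have norm1: "Re (T t) * Re (T t) + Im (T t) * Im (T t) = 1" for t
    using unit[of t, folded T_def] cmod_power2[of "T t"] by (simp add: power2_eq_square)
  have "((\<lambda>t. Re (T t) * Re (T t) + Im (T t) * Im (T t)) has_real_derivative
      Re (vderiv 2 \<gamma> s) * Re (T s) + Re (vderiv 2 \<gamma> s) * Re (T s)
      + (Im (vderiv 2 \<gamma> s) * Im (T s) + Im (vderiv 2 \<gamma> s) * Im (T s))) (at s)"
    by (intro DERIV_add DERIV_mult has_field_derivative_Re[OF T'] has_field_derivative_Im[OF T'])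
  moreover have "((\<lambda>t. Re (T t) * Re (T t) + Im (T t) * Im (T t)) has_real_derivative 0) (at s)"
    unfolding norm1 by simp
  ultimately have orth: "Re (T s) * Re (vderiv 2 \<gamma> s) + Im (T s) * Im (vderiv 2 \<gamma> s) = 0"
    using DERIV_unique by fastforce
  have "(Re (T s))\<^sup>2 + (Im (T s))\<^sup>2 = 1"
    using norm1[of s] by (simp add: power2_eq_square)
  show ?thesis
    unfolding signed_curvature_unit_speed[OF unit] T_def[symmetric]
    using \<open>(Re (T s))\<^sup>2 + (Im (T s))\<^sup>2 = 1\<close> orth by (simp add: complex_eq_iff) algebra
qed

lemma has_vector_derivative_exp_minus_i:
  assumes "(\<theta> has_real_derivative \<theta>') (at t within S)"
  shows "((\<lambda>t. exp (- (\<i> * of_real (\<theta> t)))) has_vector_derivative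
      of_real \<theta>' * (exp (- (\<i> * of_real (\<theta> t))) * - \<i>)) (at t within S)"
proof -
  have "((\<lambda>z. exp (- (\<i> * z))) has_field_derivative exp (- (\<i> * of_real (\<theta> t))) * - \<i>)
      (at (of_real (\<theta> t)) within (\<lambda>t. complex_of_real (\<theta> t)) ` S)"
    by (auto intro!: derivative_eq_intros)
  from field_vector_diff_chain_within[OF has_vector_derivative_of_real[OF assms] this]
  show ?thesis
    by (simp add: o_def)
qed

lemma unit_tangent_exp_turning:
  assumes \<gamma>: "unit_length_closed_curve \<gamma>" and s: "s \<in> {0..1}"
  shows "vderiv 1 \<gamma> s = vderiv 1 \<gamma> 0 * exp (\<i> * of_real (integral {0..s} (signed_curvature \<gamma>)))"
proof -
  have sm: "smooth_curve \<gamma>" and unit: "\<And>t. norm (vderiv 1 \<gamma> t) = 1"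
    using \<gamma> unfolding unit_length_closed_curve_def by auto
  have T': "(vderiv 1 \<gamma> has_vector_derivative vderiv 2 \<gamma> t) (at t within {0..1})" for t
    using smooth_curve_has_vector_derivative[OF sm, of 1 t]
    by (simp add: numeral_2_eq_2 has_vector_derivative_at_within)
  define \<Theta> where "\<Theta> t = integral {0..t} (signed_curvature \<gamma>)" for t
  have \<Theta>': "(\<Theta> has_real_derivative signed_curvature \<gamma> t) (at t within {0..1})"
    if "t \<in> {0..1}" for t
    unfolding \<Theta>_def has_real_derivative_iff_has_vector_derivative
    using smooth_fun_continuous_on[OF smooth_fun_signed_curvature[OF \<gamma>], of _ 0] that
    by (intro integral_has_vector_derivative) auto
  define Z where "Z t = vderiv 1 \<gamma> t * exp (- (\<i> * of_real (\<Theta> t)))" for t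
  have "(Z has_vector_derivative 0) (at t within {0..1})" if "t \<in> {0..1}" for t
  proof -
    have "vderiv 1 \<gamma> t * (of_real (signed_curvature \<gamma> t) * (exp (- (\<i> * of_real (\<Theta> t))) * - \<i>))
        + vderiv 2 \<gamma> t * exp (- (\<i> * of_real (\<Theta> t))) = 0"
      unfolding unit_speed_frenet[OF sm unit] by (simp add: algebra_simps)
    with has_vector_derivative_mult[OF T'[of t] has_vector_derivative_exp_minus_i[OF \<Theta>'[OF that]]]
    show ?thesis
      unfolding Z_def by simp
  qed
  then obtain c where "\<And>t. t \<in> {0..1} \<Longrightarrow> Z t = c"
    using has_vector_derivative_zero_constant[OF convex_real_interval(5)] by metis
  then have "Z s = Z 0"
    using s by simp
  then show ?thesis
    unfolding Z_def \<Theta>_def by (simp add: exp_minus field_simps)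
qed

lemma has_integral_unit_tangent:
  assumes "unit_length_closed_curve \<gamma>"
  shows "(vderiv 1 \<gamma> has_integral 0) {0..1}"
proof -
  have "(vderiv 1 \<gamma> has_integral (\<gamma> 1 - \<gamma> 0)) {0..1}"
    using assms smooth_curve_has_vector_derivative[of \<gamma> 0] unfolding unit_length_closed_curve_def
    by (intro fundamental_theorem_of_calculus) (auto intro: has_vector_derivative_at_within)
  moreover have "\<gamma> 1 = \<gamma> 0"
    using assms unfolding unit_length_closed_curve_def by (metis add_0)
  ultimately show ?thesis by simp
qed

text \<open>The closing condition \<open>\<integral>\<^sub>0\<^sup>1 \<gamma>' = 0\<close>, written in terms of the tangent angle
  \<open>2\<pi>\<omega>s + \<phi>(s)\<close> with \<open>\<phi>(s) = \<integral>\<^sub>0\<^sup>s (k - 2\<pi>\<omega>)\<close>; it holds for every integer \<open>\<omega>\<close>.\<close>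

lemma closing_condition:
  assumes \<gamma>: "unit_length_closed_curve \<gamma>"
  shows "integral {0..1} (\<lambda>s. fourier_mode \<omega> s *
    exp (\<i> * of_real (integral {0..s} (\<lambda>t. signed_curvature \<gamma> t - 2 * pi * of_int \<omega>)))) = 0"
proof -
  have ck: "continuous_on {0..s} (signed_curvature \<gamma>)" for s
    using smooth_fun_continuous_on[OF smooth_fun_signed_curvature[OF \<gamma>], of _ 0] by simp
  have tangent: "vderiv 1 \<gamma> s = vderiv 1 \<gamma> 0 * (fourier_mode \<omega> s *
      exp (\<i> * of_real (integral {0..s} (\<lambda>t. signed_curvature \<gamma> t - 2 * pi * of_int \<omega>))))"
    if "s \<in> {0..1}" for s
  proof -
    have "integral {0..s} (\<lambda>t. signed_curvature \<gamma> t - 2 * pi * of_int \<omega>)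
        = integral {0..s} (signed_curvature \<gamma>) - 2 * pi * of_int \<omega> * s"
      using that ck[of s]
      by (simp add: integral_diff integrable_continuous_interval integrable_const_ivl)
    then have "integral {0..s} (signed_curvature \<gamma>)
        = 2 * pi * of_int \<omega> * s + integral {0..s} (\<lambda>t. signed_curvature \<gamma> t - 2 * pi * of_int \<omega>)"
      by simp
    then show ?thesis
      unfolding unit_tangent_exp_turning[OF \<gamma> that] fourier_mode_def
      by (simp only: of_real_add distrib_left exp_add)
  qed
  have "((\<lambda>s. vderiv 1 \<gamma> 0 * (fourier_mode \<omega> s *
      exp (\<i> * of_real (integral {0..s} (\<lambda>t. signed_curvature \<gamma> t - 2 * pi * of_int \<omega>)))))
      has_integral 0) {0..1}"
    by (rule has_integral_cong[THEN iffD1, OF tangent has_integral_unit_tangent[OF \<gamma>]])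
  then have "vderiv 1 \<gamma> 0 * integral {0..1} (\<lambda>s. fourier_mode \<omega> s *
      exp (\<i> * of_real (integral {0..s} (\<lambda>t. signed_curvature \<gamma> t - 2 * pi * of_int \<omega>)))) = 0"
    by (subst integral_mult_right[symmetric]) (rule integral_unique)
  moreover have "vderiv 1 \<gamma> 0 \<noteq> 0"
    using \<gamma> unfolding unit_length_closed_curve_def by (metis norm_zero zero_neq_one)
  ultimately show ?thesis
    by simp
qed

lemma curvature_fourier_constraints:
  fixes \<gamma> :: "real \<Rightarrow> complex" and \<omega> :: int
  assumes \<gamma>: "unit_length_closed_curve \<gamma>" and turning: "turning_number \<gamma> = of_int \<omega>" and "\<omega> \<noteq> 0"
  defines "f \<equiv> \<lambda>s. signed_curvature \<gamma> s - 2 * pi * of_int \<omega>"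
  shows "fourier_coeff f 0 = 0"
    and "(cmod (fourier_coeff f \<omega>))\<^sup>2 \<le> (2 * pi * of_int \<omega>)\<^sup>2 * (integral {0..1} (\<lambda>s. (f s)\<^sup>2))\<^sup>2 / 4"
    and "(cmod (fourier_coeff f (- \<omega>)))\<^sup>2 \<le> (2 * pi * of_int \<omega>)\<^sup>2 * (integral {0..1} (\<lambda>s. (f s)\<^sup>2))\<^sup>2 / 4"
proof -
  have ck: "continuous_on {0..1} (signed_curvature \<gamma>)"
    using smooth_fun_continuous_on[OF smooth_fun_signed_curvature[OF \<gamma>], of _ 0] by simp
  then have f: "continuous_on {0..1} f"
    unfolding f_def by (intro continuous_intros)
  have "integral {0..1} (signed_curvature \<gamma>) = 2 * pi * of_int \<omega>"
    using turning unfolding turning_number_def by (simp add: field_simps)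
  then have mean: "integral {0..1} f = 0"
    unfolding f_def using ck by (simp add: integral_diff integrable_continuous_interval)
  then show "fourier_coeff f 0 = 0"
    by (simp add: fourier_coeff_0[OF f])
  note closing = closing_condition[OF \<gamma>, of \<omega>, folded f_def]
  show "(cmod (fourier_coeff f \<omega>))\<^sup>2 \<le> (2 * pi * of_int \<omega>)\<^sup>2 * (integral {0..1} (\<lambda>s. (f s)\<^sup>2))\<^sup>2 / 4"
    and "(cmod (fourier_coeff f (- \<omega>)))\<^sup>2 \<le> (2 * pi * of_int \<omega>)\<^sup>2 * (integral {0..1} (\<lambda>s. (f s)\<^sup>2))\<^sup>2 / 4"
    using resonant_fourier_coeff_bound[OF f mean \<open>\<omega> \<noteq> 0\<close> closing] by auto
qed

lemma curvature_deviation_estimates: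
  fixes \<gamma> :: "real \<Rightarrow> complex" and \<omega> :: int and f :: "real \<Rightarrow> real"
  assumes \<gamma>: "unit_length_closed_curve \<gamma>" "turning_number \<gamma> = of_int \<omega>" and "\<omega> \<noteq> 0"
    and \<kappa>_def: "\<kappa> = 2 * pi * of_int \<omega>" and f_def: "f = (\<lambda>s. signed_curvature \<gamma> s - \<kappa>)"
    and e_def: "e = integral {0..1} (\<lambda>s. (f s)\<^sup>2)"
  shows "mu m \<omega> * e - mu m \<omega> * \<kappa>\<^sup>2 / 2 * e\<^sup>2 \<le> dissipation m \<kappa> f"
    and "r \<le> m + 2 \<Longrightarrow> integral {0..1} (\<lambda>s. ((deriv ^^ r) f s)\<^sup>2)
      \<le> (4 * (of_int \<omega>) ^ 4 + \<kappa> ^ (2 * r) * \<kappa>\<^sup>2 / 2) * (dissipation m \<kappa> f + e\<^sup>2)"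
proof -
  have f: "smooth_fun f" "\<And>s. f (s + 1) = f s"
    unfolding f_def using \<gamma>(1)
    by (auto intro: smooth_fun_diff smooth_fun_signed_curvature smooth_fun_const signed_curvature_periodic)
  have constraints: "fourier_coeff f 0 = 0"
    "(cmod (fourier_coeff f \<omega>))\<^sup>2 \<le> \<kappa>\<^sup>2 * e\<^sup>2 / 4" "(cmod (fourier_coeff f (- \<omega>)))\<^sup>2 \<le> \<kappa>\<^sup>2 * e\<^sup>2 / 4"
    using curvature_fourier_constraints[OF \<gamma> \<open>\<omega> \<noteq> 0\<close>] unfolding f_def e_def \<kappa>_def by auto
  have "mu m \<omega> * (e - 2 * (\<kappa>\<^sup>2 * e\<^sup>2 / 4)) \<le> dissipation m \<kappa> f"
    using dissipation_lower_bound[OF f \<open>\<omega> \<noteq> 0\<close> constraints] unfolding \<kappa>_def e_def .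
  then show "mu m \<omega> * e - mu m \<omega> * \<kappa>\<^sup>2 / 2 * e\<^sup>2 \<le> dissipation m \<kappa> f"
    by (simp add: algebra_simps)
  assume "r \<le> m + 2"
  have "integral {0..1} (\<lambda>s. ((deriv ^^ r) f s)\<^sup>2)
      \<le> 4 * (of_int \<omega>) ^ 4 * dissipation m \<kappa> f + 2 * \<kappa> ^ (2 * r) * (\<kappa>\<^sup>2 * e\<^sup>2 / 4)"
    using funpow_deriv_square_bound[OF f \<open>\<omega> \<noteq> 0\<close> \<open>r \<le> m + 2\<close> constraints] unfolding \<kappa>_def .
  moreover have "0 \<le> \<kappa> ^ (2 * r) * \<kappa>\<^sup>2 / 2 * dissipation m \<kappa> f" "0 \<le> 4 * (of_int \<omega>) ^ 4 * e\<^sup>2"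
    using dissipation_nonneg[of m \<kappa> f] by (simp_all add: power_mult)
  moreover have "(4 * (of_int \<omega>) ^ 4 + \<kappa> ^ (2 * r) * \<kappa>\<^sup>2 / 2) * (dissipation m \<kappa> f + e\<^sup>2)
      = 4 * (of_int \<omega>) ^ 4 * dissipation m \<kappa> f + 2 * \<kappa> ^ (2 * r) * (\<kappa>\<^sup>2 * e\<^sup>2 / 4)
        + (\<kappa> ^ (2 * r) * \<kappa>\<^sup>2 / 2 * dissipation m \<kappa> f + 4 * (of_int \<omega>) ^ 4 * e\<^sup>2)"
    by (simp add: algebra_simps)
  ultimately show "integral {0..1} (\<lambda>s. ((deriv ^^ r) f s)\<^sup>2)
      \<le> (4 * (of_int \<omega>) ^ 4 + \<kappa> ^ (2 * r) * \<kappa>\<^sup>2 / 2) * (dissipation m \<kappa> f + e\<^sup>2)"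
    by linarith
qed

theorem mainTheorem14:
  fixes m :: nat and \<omega> :: int
  assumes "m \<ge> 1" and "\<omega> \<noteq> 0"
  shows "mu m \<omega> > 0 \<and>
    (\<exists>C :: real. \<exists>Cr :: nat \<Rightarrow> real.
      \<forall>\<gamma>. unit_length_closed_curve \<gamma> \<and> turning_number \<gamma> = real_of_int \<omega> \<longrightarrow>
        (let \<kappa> = 2 * pi * real_of_int \<omega>;
             f = (\<lambda>s. signed_curvature \<gamma> s - \<kappa>);
             e = integral {0..1} (\<lambda>s. (f s)\<^sup>2)
         in dissipation m \<kappa> f \<ge> mu m \<omega> * e - C * e\<^sup>2 \<and>
            (\<forall>r \<le> m + 2. integral {0..1} (\<lambda>s. ((deriv ^^ r) f s)\<^sup>2)
                            \<le> Cr r * (dissipation m \<kappa> f + e\<^sup>2))))"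
proof -
  \<comment> \<open>The estimates hold for every \<open>m\<close>.\<close>
  define \<kappa> where "\<kappa> = 2 * pi * real_of_int \<omega>"
  show ?thesis
    unfolding Let_def \<kappa>_def[symmetric]
    using mu_pos[OF \<open>\<omega> \<noteq> 0\<close>] curvature_deviation_estimates[OF _ _ \<open>\<omega> \<noteq> 0\<close> \<kappa>_def refl refl]
    by (intro conjI exI[of _ "mu m \<omega> * \<kappa>\<^sup>2 / 2"]
          exI[of _ "\<lambda>r. 4 * (of_int \<omega>) ^ 4 + \<kappa> ^ (2 * r) * \<kappa>\<^sup>2 / 2"] allI impI) auto
qed

end
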